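(* Let $k=h/2$, with $h(r)=2(r-r_+)+4M\log(r/r_+)+\frac{3M^2(r_+-r)^2}{r_+r^2}+2M\arctan\frac{(C_{\mathrm{hyp}}-1)M}{r}-2M\arctan\frac{(C_{\mathrm{hyp}}-1)M}{r_+}$ and $C_{\mathrm{hyp}}\ge1$. Then $t_{\mathrm{Hor}}=v-k(r)$ is a horizon crossing time function on the domain of outer communication of a subextreme Kerr spacetime, and $k(r_+)=0$.
   Context: Kerr spacetime with $M>0$, $|a|<M$, in ingoing Eddington–Finkelstein coordinates $(v,r,\theta,\phi)$ with metric $g_{ab}=-2(dr)_{(a}(dv)_{b)}+2a\sin^2\theta(d\phi)_{(a}(dr)_{b)}+\frac{4Mar\sin^2\theta}{\Sigma}(d\phi)_{(a}(dv)_{b)}+\frac{\Delta-a^2\sin^2\theta}{\Sigma}(dv)_a(dv)_b+\frac{a^2\sin^2\theta\Delta-(a^2+r^2)^2}{\Sigma}\sin^2\theta(d\phi)_a(d\phi)_b-\Sigma(d\theta)_a(d\theta)_b$, $\Sigma=r^2+a^2\cos^2\theta$, $\Delta=r^2-2Mr+a^2$, $r_+=M+\sqrt{M^2-a^2}$; the domain of outer communication is $\{r>r_+\}$. A function $t=v-k(r)$ is horizon crossing if (a) $k$ is smooth in an open neighbourhood of $[r_+,\infty)$, (b) the level sets of $t$ are strictly spacelike in $\{r>r_+\}$, and (c) for large $r$, $k'(r)-(a^2+r^2)/\Delta=O(r^{-2})$. *)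

theory Defs
  imports "HOL-Analysis.Analysis" "HOL-Library.Landau_Symbols"
begin

definition Sigma_K :: "real \<Rightarrow> real \<Rightarrow> real \<Rightarrow> real" where
  "Sigma_K a r \<theta> = r\<^sup>2 + a\<^sup>2 * (cos \<theta>)\<^sup>2"

definition Delta_K :: "real \<Rightarrow> real \<Rightarrow> real \<Rightarrow> real" where
  "Delta_K M a r = r\<^sup>2 - 2 * M * r + a\<^sup>2"

definition r_plus :: "real \<Rightarrow> real \<Rightarrow> real" where
  "r_plus M a = M + sqrt (M\<^sup>2 - a\<^sup>2)"

text \<open>Kerr metric in ingoing Eddington--Finkelstein coordinates (v,r,theta,phi), evaluated
  on a vector with components (Xv, Xr, Xth, Xph) at the point with coordinates r, theta
  (the metric does not depend on v, phi). Signature (+,-,-,-).\<close>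
definition kerr_g :: "real \<Rightarrow> real \<Rightarrow> real \<Rightarrow> real \<Rightarrow> real \<times> real \<times> real \<times> real \<Rightarrow> real" where
  "kerr_g M a r \<theta> X = (case X of (Xv, Xr, Xth, Xph) \<Rightarrow>
     (let \<Sigma> = Sigma_K a r \<theta>; \<Delta> = Delta_K M a r; s2 = (sin \<theta>)\<^sup>2 in
       - 2 * Xr * Xv
       + 2 * a * s2 * Xph * Xr
       + (4 * M * a * r * s2 / \<Sigma>) * Xph * Xv
       + ((\<Delta> - a\<^sup>2 * s2) / \<Sigma>) * Xv\<^sup>2
       + ((a\<^sup>2 * s2 * \<Delta> - (a\<^sup>2 + r\<^sup>2)\<^sup>2) / \<Sigma>) * s2 * Xph\<^sup>2
       - \<Sigma> * Xth\<^sup>2))"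

definition smooth_on :: "real set \<Rightarrow> (real \<Rightarrow> real) \<Rightarrow> bool" where
  "smooth_on U f \<longleftrightarrow> (\<forall>n. ((deriv ^^ n) f) differentiable_on U)"

text \<open>A horizon crossing function t = v - k(r).\<close>
definition horizon_crossing :: "real \<Rightarrow> real \<Rightarrow> (real \<Rightarrow> real) \<Rightarrow> bool" where
  "horizon_crossing M a k \<longleftrightarrow>
     (\<exists>U. open U \<and> {r_plus M a..} \<subseteq> U \<and> smooth_on U k)
   \<and> (\<forall>r \<theta> Xv Xr Xth Xph. r > r_plus M a \<and> 0 < \<theta> \<and> \<theta> < pi
        \<and> Xv = deriv k r * Xr \<and> (Xv, Xr, Xth, Xph) \<noteq> (0, 0, 0, 0)
        \<longrightarrow> kerr_g M a r \<theta> (Xv, Xr, Xth, Xph) < 0)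
   \<and> (\<lambda>r. deriv k r - (a\<^sup>2 + r\<^sup>2) / Delta_K M a r) \<in> O[at_top](\<lambda>r. 1 / r\<^sup>2)"

definition h_hor :: "real \<Rightarrow> real \<Rightarrow> real \<Rightarrow> real \<Rightarrow> real" where
  "h_hor M a C r = 2 * (r - r_plus M a) + 4 * M * ln (r / r_plus M a)
     + 3 * M\<^sup>2 * (r_plus M a - r)\<^sup>2 / (r_plus M a * r\<^sup>2)
     + 2 * M * arctan ((C - 1) * M / r) - 2 * M * arctan ((C - 1) * M / r_plus M a)"

end

theory Submission
  imports Defs "HOL-Real_Asymp.Real_Asymp"
begin

(* Along a level set of t = v - k(r) one has dv = kappa dr with kappa = k'(r).  On such
   vectors Sigma times the metric, minus the d theta part, is a quadratic form in (dr, dphi)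
   whose dphi^2 coefficient is negative and whose discriminant is
   4 sin^2 theta Sigma^2 (Delta kappa^2 - 2 (r^2 + a^2) kappa + a^2 sin^2 theta);
   so the level sets are spacelike as soon as Delta kappa^2 - 2 (r^2 + a^2) kappa + a^2 < 0.
   With kappa = 1 + e and Delta <= (r - M)^2 this follows from 0 <= e and e (r - M) <= r,
   two elementary estimates on the explicit derivative k'.  Smoothness holds because k is
   built from ln, arctan and rational functions on r > 0, a class closed under
   differentiation; the asymptotic condition is a direct expansion at infinity. *)

inductive_set elementary_on :: "real set \<Rightarrow> (real \<Rightarrow> real) set" for U :: "real set" where
  const: "(\<lambda>x. c) \<in> elementary_on U"
| ident: "(\<lambda>x. x) \<in> elementary_on U"
| add: "f \<in> elementary_on U \<Longrightarrow> g \<in> elementary_on U \<Longrightarrow> (\<lambda>x. f x + g x) \<in> elementary_on U"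
| mult: "f \<in> elementary_on U \<Longrightarrow> g \<in> elementary_on U \<Longrightarrow> (\<lambda>x. f x * g x) \<in> elementary_on U"
| inverse: "f \<in> elementary_on U \<Longrightarrow> \<forall>x\<in>U. f x \<noteq> 0 \<Longrightarrow> (\<lambda>x. inverse (f x)) \<in> elementary_on U"
| ln: "f \<in> elementary_on U \<Longrightarrow> \<forall>x\<in>U. f x > 0 \<Longrightarrow> (\<lambda>x. ln (f x)) \<in> elementary_on U"
| arctan: "f \<in> elementary_on U \<Longrightarrow> (\<lambda>x. arctan (f x)) \<in> elementary_on U"
(* Closure under agreement on U is what makes the class stable under deriv: the derivative
   of a member is known to agree with another member only on U. *)
| cong: "f \<in> elementary_on U \<Longrightarrow> \<forall>x\<in>U. g x = f x \<Longrightarrow> g \<in> elementary_on U"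

lemma elementary_on_diff:
  assumes "f \<in> elementary_on U" and "g \<in> elementary_on U"
  shows "(\<lambda>x. f x - g x) \<in> elementary_on U"
proof -
  have "(\<lambda>x. f x + (-1) * g x) \<in> elementary_on U"
    using assms by (intro elementary_on.add elementary_on.mult elementary_on.const)
  then show ?thesis by (rule elementary_on.cong) simp
qed

lemma elementary_on_divide:
  assumes "f \<in> elementary_on U" and "g \<in> elementary_on U" and "\<forall>x\<in>U. g x \<noteq> 0"
  shows "(\<lambda>x. f x / g x) \<in> elementary_on U"
proof -
  have "(\<lambda>x. f x * inverse (g x)) \<in> elementary_on U"
    using assms by (intro elementary_on.mult elementary_on.inverse)
  then show ?thesis by (rule elementary_on.cong) (simp add: divide_inverse)
qed

lemma elementary_on_power:
  assumes "f \<in> elementary_on U"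
  shows "(\<lambda>x. f x ^ n) \<in> elementary_on U"
proof (induction n)
  case 0
  show ?case by (rule elementary_on.cong[OF elementary_on.const[of 1]]) simp
next
  case (Suc n)
  show ?case
    by (rule elementary_on.cong[OF elementary_on.mult[OF assms Suc.IH]]) simp
qed

lemma elementary_on_has_derivative:
  assumes "open U" and "f \<in> elementary_on U"
  shows "\<exists>f'\<in>elementary_on U. \<forall>x\<in>U. (f has_real_derivative f' x) (at x)"
  using assms(2)
proof induction
  case (const c)
  show ?case by (intro bexI[of _ "\<lambda>x. 0"] ballI elementary_on.const) auto
next
  case ident
  show ?case by (intro bexI[of _ "\<lambda>x. 1"] ballI elementary_on.const) auto
next
  case (add f g)
  then obtain f' g' where "f' \<in> elementary_on U" "g' \<in> elementary_on U"
    "\<forall>x\<in>U. (f has_real_derivative f' x) (at x)" "\<forall>x\<in>U. (g has_real_derivative g' x) (at x)"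
    by blast
  then show ?case
    by (intro bexI[of _ "\<lambda>x. f' x + g' x"] ballI elementary_on.add) (auto intro: DERIV_add)
next
  case (mult f g)
  then obtain f' g' where "f' \<in> elementary_on U" "g' \<in> elementary_on U"
    "\<forall>x\<in>U. (f has_real_derivative f' x) (at x)" "\<forall>x\<in>U. (g has_real_derivative g' x) (at x)"
    by blast
  then show ?case using mult.hyps
    by (intro bexI[of _ "\<lambda>x. f' x * g x + g' x * f x"] ballI elementary_on.add elementary_on.mult)
       (auto intro: DERIV_mult)
next
  case (inverse f)
  then obtain f' where f': "f' \<in> elementary_on U" "\<forall>x\<in>U. (f has_real_derivative f' x) (at x)"
    by blast
  show ?case
  proof (intro bexI[of _ "\<lambda>x. (-1) * f' x * inverse (f x) ^ 2"] ballI)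
    fix x assume "x \<in> U"
    then show "((\<lambda>x. inverse (f x)) has_real_derivative (-1) * f' x * inverse (f x) ^ 2) (at x)"
      using f'(2) inverse.hyps by (auto intro!: derivative_eq_intros simp: power2_eq_square)
  next
    have "(\<lambda>x. inverse (f x)) \<in> elementary_on U"
      using inverse.hyps by (rule elementary_on.inverse)
    then show "(\<lambda>x. (-1) * f' x * inverse (f x) ^ 2) \<in> elementary_on U"
      using f'(1) by (intro elementary_on.mult elementary_on_power elementary_on.const)
  qed
next
  case (ln f)
  then obtain f' where f': "f' \<in> elementary_on U" "\<forall>x\<in>U. (f has_real_derivative f' x) (at x)"
    by blast
  show ?case
  proof (intro bexI[of _ "\<lambda>x. f' x / f x"] ballI)
    fix x assume "x \<in> U"
    then show "((\<lambda>x. ln (f x)) has_real_derivative f' x / f x) (at x)"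
      using f'(2) ln.hyps by (auto intro!: derivative_eq_intros)
  next
    show "(\<lambda>x. f' x / f x) \<in> elementary_on U"
      using f'(1) ln.hyps by (intro elementary_on_divide) auto
  qed
next
  case (arctan f)
  then obtain f' where f': "f' \<in> elementary_on U" "\<forall>x\<in>U. (f has_real_derivative f' x) (at x)"
    by blast
  show ?case
  proof (intro bexI[of _ "\<lambda>x. f' x / (1 + f x ^ 2)"] ballI)
    fix x assume "x \<in> U"
    then show "((\<lambda>x. arctan (f x)) has_real_derivative f' x / (1 + f x ^ 2)) (at x)"
      using f'(2) by (auto intro!: derivative_eq_intros simp: divide_inverse)
  next
    show "(\<lambda>x. f' x / (1 + f x ^ 2)) \<in> elementary_on U"
      using f'(1) arctan.hyps
      by (intro elementary_on_divide elementary_on.add elementary_on.const elementary_on_power)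
         (auto simp: add_nonneg_eq_0_iff)
  qed
next
  case (cong f g)
  then obtain f' where f': "f' \<in> elementary_on U" "\<forall>x\<in>U. (f has_real_derivative f' x) (at x)"
    by blast
  show ?case
  proof (intro bexI[OF _ f'(1)] ballI)
    fix x assume "x \<in> U"
    show "(g has_real_derivative f' x) (at x)"
      by (rule has_field_derivative_transform_within_open[of f _ _ U])
         (use f'(2) cong.hyps(2) assms(1) \<open>x \<in> U\<close> in auto)
  qed
qed

lemma elementary_on_higher_deriv:
  assumes "open U" and "f \<in> elementary_on U"
  shows "(deriv ^^ n) f \<in> elementary_on U"
proof (induction n)
  case 0
  show ?case using assms(2) by simp
next
  case (Suc n)
  then obtain f' where f': "f' \<in> elementary_on U"
    and "\<forall>x\<in>U. ((deriv ^^ n) f has_real_derivative f' x) (at x)"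
    using elementary_on_has_derivative[OF assms(1)] by blast
  then have "\<forall>x\<in>U. (deriv ^^ Suc n) f x = f' x"
    by (simp add: DERIV_imp_deriv)
  with f' show ?case by (rule elementary_on.cong)
qed

lemma elementary_on_smooth:
  assumes "open U" and "f \<in> elementary_on U"
  shows "smooth_on U f"
  unfolding smooth_on_def
proof
  fix n
  obtain f' where "\<forall>x\<in>U. ((deriv ^^ n) f has_real_derivative f' x) (at x)"
    using elementary_on_has_derivative[OF assms(1) elementary_on_higher_deriv[OF assms]] by blast
  then show "(deriv ^^ n) f differentiable_on U"
    unfolding differentiable_on_def
    by (blast intro: differentiable_at_withinI real_differentiable_def[THEN iffD2])
qed

lemma quadratic_form_neg_definite:
  fixes A B C x y :: real
  assumes "C < 0" and "B\<^sup>2 < 4 * A * C" and "(x, y) \<noteq> (0, 0)"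
  shows "A * x\<^sup>2 + B * x * y + C * y\<^sup>2 < 0"
proof (cases "x = 0")
  case True
  then show ?thesis
    using assms by (simp add: mult_neg_pos)
next
  case False
  have "4 * C * (A * x\<^sup>2 + B * x * y + C * y\<^sup>2) = (2 * C * y + B * x)\<^sup>2 + (4 * A * C - B\<^sup>2) * x\<^sup>2"
    by algebra
  moreover have "0 < (4 * A * C - B\<^sup>2) * x\<^sup>2"
    using False assms(2) by simp
  ultimately have "0 < 4 * C * (A * x\<^sup>2 + B * x * y + C * y\<^sup>2)"
    by (smt (verit) zero_le_power2)
  then show ?thesis
    using assms(1) by (simp add: zero_less_mult_iff)
qed

lemma kerr_discriminant_neg:
  fixes M a r \<kappa> :: real
  assumes "M > 0" and "a\<^sup>2 \<le> M\<^sup>2" and "M < r" and "1 \<le> \<kappa>" and "(\<kappa> - 1) * (r - M) \<le> r"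
  shows "Delta_K M a r * \<kappa>\<^sup>2 - 2 * (a\<^sup>2 + r\<^sup>2) * \<kappa> + a\<^sup>2 < 0"
proof -
  define e where "e = \<kappa> - 1"
  have e: "0 \<le> e" "0 \<le> e * (r - M)" "e * (r - M) \<le> r"
    using assms by (simp_all add: e_def)
  have "Delta_K M a r * \<kappa>\<^sup>2 - 2 * (a\<^sup>2 + r\<^sup>2) * \<kappa> + a\<^sup>2
      = Delta_K M a r * e\<^sup>2 - r\<^sup>2 - 2 * M * r - 4 * M * r * e"
    unfolding e_def Delta_K_def by algebra
  moreover have "Delta_K M a r * e\<^sup>2 \<le> r\<^sup>2"
  proof -
    have "Delta_K M a r \<le> (r - M)\<^sup>2"
      using assms(2) by (simp add: Delta_K_def power2_diff)
    then have "Delta_K M a r * e\<^sup>2 \<le> (r - M)\<^sup>2 * e\<^sup>2"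
      by (rule mult_right_mono) simp
    also have "\<dots> = (e * (r - M))\<^sup>2"
      by (simp add: power_mult_distrib)
    also have "\<dots> \<le> r\<^sup>2"
      using e by (intro power_mono) auto
    finally show ?thesis .
  qed
  moreover have "0 < M * r" and "0 \<le> M * r * e"
    using assms e by simp_all
  ultimately show ?thesis
    by linarith
qed

lemma kerr_g_level_set_neg:
  fixes M a r \<theta> \<kappa> Xr Xth Xph :: real
  assumes "M > 0" and "r > 0" and "0 < \<theta>" and "\<theta> < pi"
    and disc: "Delta_K M a r * \<kappa>\<^sup>2 - 2 * (a\<^sup>2 + r\<^sup>2) * \<kappa> + a\<^sup>2 < 0"
    and nonzero: "(Xr, Xth, Xph) \<noteq> (0, 0, 0)"
  shows "kerr_g M a r \<theta> (\<kappa> * Xr, Xr, Xth, Xph) < 0"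
proof -
  define s S D P where "s = (sin \<theta>)\<^sup>2" and "S = Sigma_K a r \<theta>" and "D = Delta_K M a r"
    and "P = a\<^sup>2 + r\<^sup>2"
  define A B C where "A = (D - a\<^sup>2 * s) * \<kappa>\<^sup>2 - 2 * S * \<kappa>" and "B = 2 * a * s * (S + 2 * M * r * \<kappa>)"
    and "C = s * (a\<^sup>2 * s * D - P\<^sup>2)"
  have "0 < sin \<theta>"
    using assms(3,4) by (rule sin_gt_zero)
  then have s: "0 < s" "s \<le> 1"
    by (simp_all add: s_def abs_square_le_1)
  have S_eq: "S = r\<^sup>2 + a\<^sup>2 * (1 - s)"
    by (simp add: S_def s_def Sigma_K_def cos_squared_eq)
  have S: "S > 0"
    using S_eq assms(2) s by (simp add: add_pos_nonneg)
  have metric: "kerr_g M a r \<theta> (\<kappa> * Xr, Xr, Xth, Xph) = (A * Xr\<^sup>2 + B * Xr * Xph + C * Xph\<^sup>2) / S - S * Xth\<^sup>2"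
    using S unfolding kerr_g_def Let_def A_def B_def C_def s_def S_def D_def P_def
    by (simp add: field_simps power2_eq_square)
  have P: "P > 0"
    using assms(2) by (simp add: P_def add_nonneg_pos)
  have "a\<^sup>2 * s * D < P\<^sup>2"
  proof (cases "D \<le> 0")
    case True
    then have "a\<^sup>2 * s * D \<le> 0"
      using s by (simp add: mult_nonneg_nonpos)
    then show ?thesis
      using P by (smt (verit) zero_less_power2)
  next
    case False
    have "a\<^sup>2 * s \<le> a\<^sup>2"
      using s by (simp add: mult_left_le)
    then have "a\<^sup>2 * s \<le> P"
      unfolding P_def using zero_le_power2[of r] by linarith
    then have "a\<^sup>2 * s * D \<le> P * D"
      using False by (simp add: mult_right_mono)
    also have "\<dots> < P * P"
      using P assms(1,2) by (intro mult_strict_left_mono) (simp_all add: D_def P_def Delta_K_def)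
    finally show ?thesis
      by (simp add: power2_eq_square)
  qed
  then have C: "C < 0"
    using s by (simp add: C_def mult_pos_neg)
  have "B\<^sup>2 - 4 * A * C = 4 * s * S\<^sup>2 * (D * \<kappa>\<^sup>2 - 2 * P * \<kappa> + a\<^sup>2 * s)"
    unfolding A_def B_def C_def S_eq D_def P_def Delta_K_def by algebra
  moreover have "D * \<kappa>\<^sup>2 - 2 * P * \<kappa> + a\<^sup>2 * s < 0"
    using disc s by (smt (verit) D_def P_def mult_left_le zero_le_power2)
  moreover have "0 < 4 * s * S\<^sup>2"
    using s S by simp
  ultimately have "B\<^sup>2 < 4 * A * C"
    by (smt (verit) mult_pos_neg)
  show ?thesis
  proof (cases "(Xr, Xph) = (0, 0)")
    case True
    then show ?thesis
      using metric nonzero S by simp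
  next
    case False
    then have "A * Xr\<^sup>2 + B * Xr * Xph + C * Xph\<^sup>2 < 0"
      using quadratic_form_neg_definite C \<open>B\<^sup>2 < 4 * A * C\<close> by blast
    then have "(A * Xr\<^sup>2 + B * Xr * Xph + C * Xph\<^sup>2) / S < 0"
      using S by (rule divide_neg_pos)
    moreover have "0 \<le> S * Xth\<^sup>2"
      using S by simp
    ultimately show ?thesis
      using metric by linarith
  qed
qed

definition k_hor_deriv :: "real \<Rightarrow> real \<Rightarrow> real \<Rightarrow> real \<Rightarrow> real" where
  "k_hor_deriv M a C r = 1 + 2 * M / r + 3 * M\<^sup>2 * (r - r_plus M a) / r ^ 3
     - (C - 1) * M\<^sup>2 / (r\<^sup>2 + (C - 1)\<^sup>2 * M\<^sup>2)"

lemma has_real_derivative_h_hor_half: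
  assumes "r > 0" and "r_plus M a > 0"
  shows "((\<lambda>r. h_hor M a C r / 2) has_real_derivative k_hor_deriv M a C r) (at r)"
proof -
  define rp c where "rp = r_plus M a" and "c = C - 1"
  define d where "d = r\<^sup>2 + c\<^sup>2 * M\<^sup>2"
  define log_term rat_term atan_term where
    "log_term = (\<lambda>r. ln (r / rp))" and
    "rat_term = (\<lambda>r. (rp - r)\<^sup>2 / (rp * r\<^sup>2))" and
    "atan_term = (\<lambda>r. arctan (c * M / r))"
  have rp: "rp > 0"
    using assms(2) by (simp add: rp_def)
  have d: "d > 0"
    using assms(1) by (simp add: d_def add_pos_nonneg)
  have "(log_term has_real_derivative 1 / r) (at r)"
    unfolding log_term_def using assms(1) rp
    by (auto intro!: derivative_eq_intros simp: field_simps)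
  moreover have "(rat_term has_real_derivative 2 * (r - rp) / r ^ 3) (at r)"
    unfolding rat_term_def using assms(1) rp
    by (auto intro!: derivative_eq_intros simp: field_simps power2_eq_square power3_eq_cube)
  moreover have "(atan_term has_real_derivative - (c * M) / d) (at r)"
    unfolding atan_term_def d_def using assms(1) d
    by (auto intro!: derivative_eq_intros simp: d_def field_simps power2_eq_square)
  moreover have "h_hor M a C = (\<lambda>r. 2 * (r - rp) + 4 * M * log_term r + 3 * M\<^sup>2 * rat_term r
      + 2 * M * atan_term r - 2 * M * arctan (c * M / rp))"
    by (simp add: fun_eq_iff h_hor_def rp_def c_def log_term_def rat_term_def atan_term_def)
  ultimately show ?thesis
    unfolding k_hor_deriv_def rp_def[symmetric] c_def[symmetric] d_def[symmetric]
    using assms(1) d by (auto intro!: derivative_eq_intros simp: field_simps power2_eq_square)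
qed

lemma k_hor_deriv_bounds:
  fixes M a C r :: real
  assumes "M > 0" and "M \<le> r_plus M a" and "r_plus M a < r" and "C \<ge> 1"
  shows "1 \<le> k_hor_deriv M a C r" and "(k_hor_deriv M a C r - 1) * (r - M) \<le> r"
proof -
  define rp c where "rp = r_plus M a" and "c = C - 1"
  have r: "0 < r" "M < r" and c: "0 \<le> c"
    using assms by (auto simp: rp_def c_def)
  have denom: "r\<^sup>2 + c\<^sup>2 * M\<^sup>2 > 0"
    using r by (simp add: add_pos_nonneg)
  have "2 * (c * M * r) \<le> r\<^sup>2 + c\<^sup>2 * M\<^sup>2"
    using sum_squares_bound[of r "c * M"] by (simp add: power_mult_distrib algebra_simps)
  moreover have "0 \<le> c * M * r"
    using c r assms(1) by simp
  ultimately have "c * M * r \<le> r\<^sup>2 + c\<^sup>2 * M\<^sup>2"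
    by linarith
  then have arctan_term: "c * M\<^sup>2 / (r\<^sup>2 + c\<^sup>2 * M\<^sup>2) \<le> M / r"
    using denom r assms(1) by (simp add: divide_simps power2_eq_square mult_left_mono)
  have "0 \<le> c * M\<^sup>2 / (r\<^sup>2 + c\<^sup>2 * M\<^sup>2)"
    using c denom by simp
  moreover have "0 \<le> 3 * M\<^sup>2 * (r - rp) / r ^ 3" and "3 * M\<^sup>2 * (r - rp) / r ^ 3 \<le> 3 * M\<^sup>2 * (r - M) / r ^ 3"
    using assms r by (auto simp: rp_def divide_right_mono)
  ultimately have e_bounds: "0 \<le> k_hor_deriv M a C r - 1"
      "k_hor_deriv M a C r - 1 \<le> 2 * M / r + 3 * M\<^sup>2 * (r - M) / r ^ 3"
    using arctan_term by (auto simp: k_hor_deriv_def rp_def c_def)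
  then show "1 \<le> k_hor_deriv M a C r" by simp
  define y where "y = M * (r - M)"
  have y: "0 \<le> y" "4 * y \<le> r\<^sup>2"
    using r assms(1) sum_squares_bound[of r "2 * M"]
    by (auto simp: y_def power2_eq_square algebra_simps)
  have "(2 * M / r + 3 * M\<^sup>2 * (r - M) / r ^ 3) * (r - M) = (2 * r\<^sup>2 * y + 3 * y * y) / r ^ 3"
    using r by (simp add: y_def field_simps power2_eq_square power3_eq_cube)
  also have "\<dots> \<le> r ^ 4 / r ^ 3"
  proof (rule divide_right_mono)
    have "r ^ 4 - (2 * r\<^sup>2 * y + 3 * y * y) = (r\<^sup>2 - 3 * y) * (r\<^sup>2 + y)"
      by algebra
    moreover have "0 \<le> (r\<^sup>2 - 3 * y) * (r\<^sup>2 + y)"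
      using y by (intro mult_nonneg_nonneg) auto
    ultimately show "2 * r\<^sup>2 * y + 3 * y * y \<le> r ^ 4"
      by linarith
  qed (use r in simp)
  also have "\<dots> = r"
    using r by (simp add: power_eq_if)
  finally have "(2 * M / r + 3 * M\<^sup>2 * (r - M) / r ^ 3) * (r - M) \<le> r" .
  moreover have "(k_hor_deriv M a C r - 1) * (r - M) \<le> (2 * M / r + 3 * M\<^sup>2 * (r - M) / r ^ 3) * (r - M)"
    using e_bounds(2) r by (intro mult_right_mono) auto
  ultimately show "(k_hor_deriv M a C r - 1) * (r - M) \<le> r"
    by linarith
qed

lemma k_hor_deriv_asymptotics:
  "(\<lambda>r. k_hor_deriv M a C r - (a\<^sup>2 + r\<^sup>2) / Delta_K M a r) \<in> O[at_top](\<lambda>r. 1 / r\<^sup>2)"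
  unfolding k_hor_deriv_def Delta_K_def by real_asymp

lemma h_hor_half_elementary:
  assumes "r_plus M a > 0"
  shows "(\<lambda>r. h_hor M a C r / 2) \<in> elementary_on {0<..}"
  unfolding h_hor_def
  using assms
  by (intro elementary_on_divide elementary_on_diff elementary_on.add elementary_on.mult
      elementary_on.ln elementary_on.arctan elementary_on_power elementary_on.const elementary_on.ident)
     auto

theorem lemma2p22:
  fixes M a C_hyp :: real
  assumes "M > 0" and "\<bar>a\<bar> < M" and "C_hyp \<ge> 1"
  shows "horizon_crossing M a (\<lambda>r. h_hor M a C_hyp r / 2)
       \<and> h_hor M a C_hyp (r_plus M a) / 2 = 0"
proof -
  define k where "k = (\<lambda>r. h_hor M a C_hyp r / 2)"
  have a: "a\<^sup>2 \<le> M\<^sup>2" and rp: "M \<le> r_plus M a"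
    using assms(1,2) by (auto simp: r_plus_def abs_le_square_iff[symmetric])
  have deriv_k: "deriv k r = k_hor_deriv M a C_hyp r" if "r > 0" for r
    unfolding k_def using has_real_derivative_h_hor_half[OF that] rp assms(1)
    by (intro DERIV_imp_deriv) auto
  have "smooth_on {0<..} k"
    unfolding k_def using rp assms(1) by (intro elementary_on_smooth h_hor_half_elementary) auto
  moreover have "kerr_g M a r \<theta> (Xv, Xr, Xth, Xph) < 0"
    if "r > r_plus M a" "0 < \<theta>" "\<theta> < pi" "Xv = deriv k r * Xr"
      "(Xv, Xr, Xth, Xph) \<noteq> (0, 0, 0, 0)" for r \<theta> Xv Xr Xth Xph
  proof -
    have r: "r > 0" "M < r"
      using that(1) rp assms(1) by auto
    have "Delta_K M a r * (k_hor_deriv M a C_hyp r)\<^sup>2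
        - 2 * (a\<^sup>2 + r\<^sup>2) * k_hor_deriv M a C_hyp r + a\<^sup>2 < 0"
      using k_hor_deriv_bounds[OF assms(1) rp that(1) assms(3)] assms(1) a r
      by (intro kerr_discriminant_neg)
    then show ?thesis
      using that deriv_k r assms(1) kerr_g_level_set_neg by auto
  qed
  moreover have "(\<lambda>r. deriv k r - (a\<^sup>2 + r\<^sup>2) / Delta_K M a r) \<in> O[at_top](\<lambda>r. 1 / r\<^sup>2)"
    using k_hor_deriv_asymptotics
    by (rule landau_o.big.in_cong[THEN iffD1, rotated])
       (use eventually_gt_at_top[of 0] in \<open>eventually_elim, simp add: deriv_k\<close>)
  ultimately have "horizon_crossing M a k"
    unfolding horizon_crossing_def using rp assms(1)
    by (intro conjI exI[of _ "{0<..}"]) auto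
  moreover have "h_hor M a C_hyp (r_plus M a) / 2 = 0"
    using rp assms(1) by (simp add: h_hor_def)
  ultimately show ?thesis
    by (simp add: k_def)
qed

end
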